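(* Let $M$ be a matroid on a finite set $E$, let $\mathcal{C}$ be a family of non-spanning circuits of $M$, and let $N$ be the free erection of $M$. Suppose every cyclic flat of $M$ is a union of circuits in $\mathcal{C}$. Then every cyclic flat of $N$ is a union of circuits in $\mathcal{C}$.
   Context: A cyclic set is a union of circuits; $\emptyset$ counts as cyclic. $M$ is the truncation of $N$ if $r_N(E)=r_M(E)+1$ and $r_M(X)=\min\{r_N(X),r_M(E)\}$ for all $X$. The free erection of $M$ is the maximum, in the weak order ($M_1\preceq M_2$ iff every independent set of $M_1$ is independent in $M_2$), of the set consisting of $M$ and all $N$ whose truncation is $M$. *)

theory Defs
  imports Main
begin

definition matroid :: "'a set \<Rightarrow> 'a set set \<Rightarrow> bool" where
  "matroid E I \<longleftrightarrow> finite E \<and> (\<forall>X\<in>I. X \<subseteq> E) \<and> {} \<in> I \<and>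
     (\<forall>X Y. X \<in> I \<and> Y \<subseteq> X \<longrightarrow> Y \<in> I) \<and>
     (\<forall>X Y. X \<in> I \<and> Y \<in> I \<and> card X < card Y \<longrightarrow> (\<exists>y\<in>Y - X. insert y X \<in> I))"

definition rk :: "'a set set \<Rightarrow> 'a set \<Rightarrow> nat" where
  "rk I X = Max {card Y | Y. Y \<subseteq> X \<and> Y \<in> I}"

definition circuit :: "'a set \<Rightarrow> 'a set set \<Rightarrow> 'a set \<Rightarrow> bool" where
  "circuit E I C \<longleftrightarrow> C \<subseteq> E \<and> C \<notin> I \<and> (\<forall>x\<in>C. C - {x} \<in> I)"

definition flat :: "'a set \<Rightarrow> 'a set set \<Rightarrow> 'a set \<Rightarrow> bool" where
  "flat E I F \<longleftrightarrow> F \<subseteq> E \<and> (\<forall>x\<in>E - F. rk I (insert x F) > rk I F)"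

definition cyclic :: "'a set \<Rightarrow> 'a set set \<Rightarrow> 'a set \<Rightarrow> bool" where
  "cyclic E I X \<longleftrightarrow> (\<exists>\<D>. (\<forall>C\<in>\<D>. circuit E I C) \<and> X = \<Union>\<D>)"

definition cyclic_flat :: "'a set \<Rightarrow> 'a set set \<Rightarrow> 'a set \<Rightarrow> bool" where
  "cyclic_flat E I F \<longleftrightarrow> cyclic E I F \<and> flat E I F"

definition spanning :: "'a set \<Rightarrow> 'a set set \<Rightarrow> 'a set \<Rightarrow> bool" where
  "spanning E I X \<longleftrightarrow> X \<subseteq> E \<and> rk I X = rk I E"

definition truncation_of :: "'a set \<Rightarrow> 'a set set \<Rightarrow> 'a set set \<Rightarrow> bool" where
  "truncation_of E IM IN \<longleftrightarrow> rk IN E = rk IM E + 1 \<and>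
     (\<forall>X. X \<subseteq> E \<longrightarrow> rk IM X = min (rk IN X) (rk IM E))"

definition weak_le :: "'a set set \<Rightarrow> 'a set set \<Rightarrow> bool" where
  "weak_le I1 I2 \<longleftrightarrow> I1 \<subseteq> I2"

definition free_erection :: "'a set \<Rightarrow> 'a set set \<Rightarrow> 'a set set \<Rightarrow> bool" where
  "free_erection E IM IN \<longleftrightarrow>
     matroid E IN \<and> (IN = IM \<or> truncation_of E IM IN) \<and>
     (\<forall>IN'. matroid E IN' \<and> (IN' = IM \<or> truncation_of E IM IN') \<longrightarrow> weak_le IN' IN)"

end

theory Submission
  imports Defs
begin

text \<open>Unless \<open>N = M\<close>, \<open>M\<close> has rank \<open>r\<close> and its free erection \<open>N\<close> rank \<open>r + 1\<close>; let \<open>F\<close>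
  be a cyclic flat of \<open>N\<close>. If \<open>F = E\<close>, no element is a coloop of \<open>N\<close>, hence none is a coloop
  of \<open>M\<close>, and \<open>E\<close> is a cyclic flat of \<open>M\<close>. Otherwise \<open>F\<close> has \<open>N\<close>-rank at most \<open>r\<close>,
  and every \<open>x \<in> F\<close> lies in an \<open>N\<close>-circuit \<open>C \<subseteq> F\<close> with at most \<open>r\<close> elements:
  if all such circuits were longer, adding the sets \<open>x + Y\<close>, \<open>Y \<subseteq> F - x\<close> independent
  of size \<open>r\<close>, as new bases would give a matroid whose truncation is still \<open>M\<close> but which
  is not below \<open>N\<close> in the weak order. Such a short circuit is a circuit of \<open>M\<close> of rank
  below \<open>r\<close>, so its \<open>M\<close>-closure agrees with its \<open>N\<close>-closure and lies in \<open>F\<close>; the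
  circuits of \<open>M\<close> inside that closure form a cyclic flat of \<open>M\<close> through \<open>x\<close> inside \<open>F\<close>,
  which by hypothesis is a union of members of \<open>\<C>\<close>.\<close>

section \<open>Independence and rank\<close>

lemma matroid_finite: "matroid E I \<Longrightarrow> finite E"
  by (simp add: matroid_def)

lemma matroid_indep_in_ground: "matroid E I \<Longrightarrow> X \<in> I \<Longrightarrow> X \<subseteq> E"
  by (simp add: matroid_def)

lemma matroid_empty_indep: "matroid E I \<Longrightarrow> {} \<in> I"
  by (simp add: matroid_def)

lemma matroid_indep_subset: "matroid E I \<Longrightarrow> X \<in> I \<Longrightarrow> Y \<subseteq> X \<Longrightarrow> Y \<in> I"
  unfolding matroid_def by blast

lemma matroid_augment:
  "matroid E I \<Longrightarrow> X \<in> I \<Longrightarrow> Y \<in> I \<Longrightarrow> card X < card Y \<Longrightarrow> \<exists>y\<in>Y - X. insert y X \<in> I"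
  unfolding matroid_def by blast

lemma matroid_finite_subset: "matroid E I \<Longrightarrow> X \<subseteq> E \<Longrightarrow> finite X"
  using matroid_finite finite_subset by blast

lemma finite_rk_candidates: "finite X \<Longrightarrow> finite {card Y | Y. Y \<subseteq> X \<and> Y \<in> I}"
  by (rule finite_subset[of _ "card ` Pow X"]) auto

lemma card_le_rk:
  assumes "matroid E I" "X \<subseteq> E" "Y \<subseteq> X" "Y \<in> I"
  shows "card Y \<le> rk I X"
  unfolding rk_def using assms
  by (intro Max_ge finite_rk_candidates matroid_finite_subset[OF assms(1,2)]) auto

lemma ex_indep_card_eq_rk:
  assumes "matroid E I" "X \<subseteq> E"
  obtains Y where "Y \<subseteq> X" "Y \<in> I" "card Y = rk I X"
proof -
  have "{card Y | Y. Y \<subseteq> X \<and> Y \<in> I} \<noteq> {}"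
    using matroid_empty_indep[OF assms(1)] by auto
  then have "rk I X \<in> {card Y | Y. Y \<subseteq> X \<and> Y \<in> I}"
    unfolding rk_def by (intro Max_in finite_rk_candidates matroid_finite_subset[OF assms])
  then show thesis using that by auto
qed

lemma rk_le_card:
  assumes "matroid E I" "X \<subseteq> E"
  shows "rk I X \<le> card X"
proof -
  obtain Y where Y: "Y \<subseteq> X" "card Y = rk I X"
    using ex_indep_card_eq_rk[OF assms] by blast
  have "card Y \<le> card X" using card_mono[OF matroid_finite_subset[OF assms] Y(1)] .
  with Y(2) show ?thesis by simp
qed

lemma rk_mono:
  assumes "matroid E I" "X' \<subseteq> E" "X \<subseteq> X'"
  shows "rk I X \<le> rk I X'"
proof -
  obtain Y where "Y \<subseteq> X" "Y \<in> I" "card Y = rk I X"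
    using ex_indep_card_eq_rk[OF assms(1) order_trans[OF assms(3,2)]] by blast
  with card_le_rk[OF assms(1,2), of Y] assms(3) show ?thesis by auto
qed

lemma rk_indep:
  assumes "matroid E I" "X \<in> I"
  shows "rk I X = card X"
  using card_le_rk[OF assms(1) _ order_refl assms(2)] rk_le_card[OF assms(1)]
    matroid_indep_in_ground[OF assms] by (simp add: le_antisym)

lemma indep_of_rk_eq_card:
  assumes "matroid E I" "X \<subseteq> E" "rk I X = card X"
  shows "X \<in> I"
proof -
  obtain Y where "Y \<subseteq> X" "Y \<in> I" "card Y = rk I X"
    using ex_indep_card_eq_rk[OF assms(1,2)] by blast
  then show ?thesis
    using assms(3) card_subset_eq[OF matroid_finite_subset[OF assms(1,2)]] by metis
qed

lemma maximal_indep_card_eq_rk: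
  assumes "matroid E I" "X \<subseteq> E" "B \<subseteq> X" "B \<in> I"
    and maximal: "\<And>e. e \<in> X - B \<Longrightarrow> insert e B \<notin> I"
  shows "card B = rk I X"
proof -
  obtain W where W: "W \<subseteq> X" "W \<in> I" "card W = rk I X"
    using ex_indep_card_eq_rk[OF assms(1,2)] by blast
  have "\<not> card B < card W"
    using matroid_augment[OF assms(1,4) W(2)] W(1) maximal by blast
  with card_le_rk[OF assms(1-4)] W(3) show ?thesis by linarith
qed

lemma ex_basis_extending:
  assumes "matroid E I" "Y \<in> I" "Y \<subseteq> X" "X \<subseteq> E"
  obtains Z where "Y \<subseteq> Z" "Z \<subseteq> X" "Z \<in> I" "card Z = rk I X"
proof -
  let ?P = "\<lambda>Z. Y \<subseteq> Z \<and> Z \<subseteq> X \<and> Z \<in> I"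
  have "finite X" using matroid_finite_subset[OF assms(1,4)] .
  then have "\<forall>Z. ?P Z \<longrightarrow> card Z < Suc (card X)"
    by (auto simp: less_Suc_eq_le card_mono)
  then obtain Z where Z: "?P Z" and greatest: "\<And>Z'. ?P Z' \<Longrightarrow> card Z' \<le> card Z"
    using ex_has_greatest_nat[of ?P Y card "Suc (card X)"] assms(2,3) by blast
  have "finite Z" using Z \<open>finite X\<close> finite_subset by blast
  have "insert e Z \<notin> I" if "e \<in> X - Z" for e
    using greatest[of "insert e Z"] Z that \<open>finite Z\<close> by auto
  then have "card Z = rk I X"
    using maximal_indep_card_eq_rk[OF assms(1,4)] Z by blast
  with Z show thesis using that by blast
qed

lemma ex_circuit_in_insert:
  assumes "matroid E I" "Y \<in> I" "insert e Y \<notin> I" "insert e Y \<subseteq> E"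
  obtains C where "circuit E I C" "e \<in> C" "C \<subseteq> insert e Y"
proof -
  let ?P = "\<lambda>C. C \<subseteq> insert e Y \<and> C \<notin> I"
  obtain C where C: "?P C" and least: "\<And>C'. ?P C' \<Longrightarrow> card C \<le> card C'"
    using ex_has_least_nat[of ?P "insert e Y" card] assms(3) by blast
  have "finite C" using C assms(4) matroid_finite_subset[OF assms(1)] by blast
  have "C - {c} \<in> I" if "c \<in> C" for c
    using least[of "C - {c}"] C card_Diff1_less[OF \<open>finite C\<close> that] by fastforce
  moreover have "e \<in> C"
    using C matroid_indep_subset[OF assms(1,2), of C] by blast
  ultimately show thesis
    using C assms(4) by (intro that) (auto simp: circuit_def)
qed

lemma rk_insert_gt:
  assumes "matroid E I" "insert e X \<subseteq> E" "B \<subseteq> X" "card B = rk I X" "e \<notin> B"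
    and "insert e B \<in> I"
  shows "rk I X < rk I (insert e X)"
proof -
  have "finite B" using assms(2,3) matroid_finite_subset[OF assms(1)] by blast
  then have "card (insert e B) = Suc (rk I X)" using assms(4,5) by simp
  moreover have "card (insert e B) \<le> rk I (insert e X)"
    using card_le_rk[OF assms(1,2) _ assms(6)] assms(3) by blast
  ultimately show ?thesis by simp
qed

lemma flat_subset_ground: "flat E I F \<Longrightarrow> F \<subseteq> E"
  by (simp add: flat_def)

lemma flat_insert_indep:
  assumes "matroid E I" "flat E I F" "Y \<in> I" "Y \<subseteq> F" "e \<in> E - F"
  shows "insert e Y \<in> I"
proof -
  have FE: "F \<subseteq> E" using flat_subset_ground[OF assms(2)] .
  obtain Z where Z: "Y \<subseteq> Z" "Z \<subseteq> F" "Z \<in> I" "card Z = rk I F"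
    using ex_basis_extending[OF assms(1,3,4) FE] by blast
  obtain W where W: "W \<subseteq> insert e F" "W \<in> I" "card W = rk I (insert e F)"
    using ex_indep_card_eq_rk[OF assms(1)] FE assms(5) by (metis Diff_iff insert_subset)
  have "card Z < card W" using Z(4) W(3) assms(2,5) by (simp add: flat_def)
  then obtain w where w: "w \<in> W - Z" "insert w Z \<in> I"
    using matroid_augment[OF assms(1) Z(3) W(2)] by blast
  have "w = e"
  proof (rule ccontr)
    assume "w \<noteq> e"
    then have "insert w Z \<subseteq> F" using w(1) W(1) Z(2) by blast
    then have "card (insert w Z) \<le> card Z"
      using card_le_rk[OF assms(1) FE _ w(2)] Z(4) by simp
    moreover have "finite Z" using Z(2) FE matroid_finite_subset[OF assms(1)] by blast
    ultimately show False using w(1) by simp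
  qed
  then show ?thesis using matroid_indep_subset[OF assms(1) w(2)] Z(1) by blast
qed

lemma flat_proper_rk_less:
  assumes "matroid E I" "flat E I F" "F \<noteq> E"
  shows "rk I F < rk I E"
proof -
  obtain e where e: "e \<in> E - F" using flat_subset_ground[OF assms(2)] assms(3) by blast
  then have "rk I F < rk I (insert e F)" using assms(2) by (simp add: flat_def)
  also have "\<dots> \<le> rk I E"
    using rk_mono[OF assms(1) order_refl] flat_subset_ground[OF assms(2)] e by blast
  finally show ?thesis .
qed

lemma circuit_rk_delete:
  assumes "matroid E I" "circuit E I C" "x \<in> C"
  shows "rk I (E - {x}) = rk I E"
proof -
  have C: "C \<subseteq> E" "C \<notin> I" "C - {x} \<in> I" using assms(2,3) by (auto simp: circuit_def)
  obtain Z where Z: "C - {x} \<subseteq> Z" "Z \<subseteq> E" "Z \<in> I" "card Z = rk I E"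
    using ex_basis_extending[OF assms(1) C(3)] C(1) by blast
  have "x \<notin> Z" using C(2) Z(1) matroid_indep_subset[OF assms(1) Z(3), of C] by blast
  then have "rk I E \<le> rk I (E - {x})" using card_le_rk[OF assms(1), of "E - {x}" Z] Z by auto
  moreover have "rk I (E - {x}) \<le> rk I E" using rk_mono[OF assms(1)] by blast
  ultimately show ?thesis by simp
qed

lemma ex_circuit_of_rk_delete:
  assumes "matroid E I" "x \<in> E" "rk I (E - {x}) = rk I E"
  obtains C where "circuit E I C" "x \<in> C"
proof -
  obtain Y where Y: "Y \<subseteq> E - {x}" "Y \<in> I" "card Y = rk I E"
    using ex_indep_card_eq_rk[OF assms(1), of "E - {x}"] assms(3) by auto
  have "insert x Y \<notin> I"
    using rk_insert_gt[OF assms(1), of x "E - {x}" Y] Y assms by (auto simp: insert_absorb)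
  then show thesis
    using ex_circuit_in_insert[OF assms(1) Y(2)] Y(1) assms(2) that by blast
qed

section \<open>Closure and cyclic flats\<close>

lemma ex_subfamily_Union_eq_iff:
  "(\<exists>\<D>\<subseteq>\<C>. F = \<Union>\<D>) \<longleftrightarrow> (\<forall>x\<in>F. \<exists>C\<in>\<C>. x \<in> C \<and> C \<subseteq> F)"
proof
  assume "\<forall>x\<in>F. \<exists>C\<in>\<C>. x \<in> C \<and> C \<subseteq> F"
  then have "F = \<Union>{C \<in> \<C>. C \<subseteq> F}" by auto
  then show "\<exists>\<D>\<subseteq>\<C>. F = \<Union>\<D>" by (intro exI[of _ "{C \<in> \<C>. C \<subseteq> F}"]) auto
qed blast

lemma cyclic_iff: "cyclic E I X \<longleftrightarrow> (\<forall>x\<in>X. \<exists>C. circuit E I C \<and> x \<in> C \<and> C \<subseteq> X)"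
proof -
  have "cyclic E I X \<longleftrightarrow> (\<exists>\<D>\<subseteq>{C. circuit E I C}. X = \<Union>\<D>)"
    unfolding cyclic_def by blast
  also have "\<dots> \<longleftrightarrow> (\<forall>x\<in>X. \<exists>C\<in>{C. circuit E I C}. x \<in> C \<and> C \<subseteq> X)"
    by (rule ex_subfamily_Union_eq_iff)
  finally show ?thesis by blast
qed

definition cl :: "'a set \<Rightarrow> 'a set set \<Rightarrow> 'a set \<Rightarrow> 'a set" where
  "cl E I X = {e \<in> E. rk I (insert e X) = rk I X}"

lemma subset_cl: "X \<subseteq> E \<Longrightarrow> X \<subseteq> cl E I X"
  by (auto simp: cl_def insert_absorb)

lemma cl_subset_ground: "cl E I X \<subseteq> E"
  by (auto simp: cl_def)

lemma rk_cl:
  assumes "matroid E I" "X \<subseteq> E"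
  shows "rk I (cl E I X) = rk I X"
proof -
  obtain B where B: "B \<subseteq> X" "B \<in> I" "card B = rk I X"
    using ex_indep_card_eq_rk[OF assms] by blast
  have "card B = rk I (cl E I X)"
  proof (rule maximal_indep_card_eq_rk[OF assms(1)])
    show "cl E I X \<subseteq> E" "B \<subseteq> cl E I X" "B \<in> I"
      using B subset_cl[OF assms(2)] by (auto simp: cl_def)
    fix e assume e: "e \<in> cl E I X - B"
    then have eE: "insert e X \<subseteq> E" and eq: "rk I (insert e X) = rk I X"
      using assms(2) by (auto simp: cl_def)
    show "insert e B \<notin> I"
    proof
      assume "insert e B \<in> I"
      then have "rk I X < rk I (insert e X)" using rk_insert_gt[OF assms(1) eE B(1,3)] e by blast
      with eq show False by simp
    qed
  qed
  with B(3) show ?thesis by simp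
qed

lemma flat_cl:
  assumes "matroid E I" "X \<subseteq> E"
  shows "flat E I (cl E I X)"
  unfolding flat_def
proof (intro conjI ballI)
  show "cl E I X \<subseteq> E" by (rule cl_subset_ground)
  fix e assume e: "e \<in> E - cl E I X"
  then have eE: "e \<in> E" and ne: "rk I (insert e X) \<noteq> rk I X" by (auto simp: cl_def)
  have "rk I X \<le> rk I (insert e X)"
    by (rule rk_mono[OF assms(1)]) (use assms(2) eE in auto)
  with ne have "rk I X < rk I (insert e X)" by simp
  also have "\<dots> \<le> rk I (insert e (cl E I X))"
    by (rule rk_mono[OF assms(1)]) (use eE subset_cl[OF assms(2)] cl_subset_ground[of E I X] in auto)
  finally show "rk I (cl E I X) < rk I (insert e (cl E I X))" using rk_cl[OF assms] by simp
qed

lemma cl_subset_flat: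
  assumes "matroid E I" "flat E I F" "X \<subseteq> F"
  shows "cl E I X \<subseteq> F"
proof
  fix e assume e: "e \<in> cl E I X"
  then have eE: "e \<in> E" and eq: "rk I (insert e X) = rk I X" by (auto simp: cl_def)
  have XE: "X \<subseteq> E" using assms(3) flat_subset_ground[OF assms(2)] by blast
  obtain B where B: "B \<subseteq> X" "B \<in> I" "card B = rk I X"
    using ex_indep_card_eq_rk[OF assms(1) XE] by blast
  show "e \<in> F"
  proof (rule ccontr)
    assume "e \<notin> F"
    then have "insert e B \<in> I"
      using flat_insert_indep[OF assms(1,2) B(2)] B(1) assms(3) eE by blast
    then have "rk I X < rk I (insert e X)"
      using rk_insert_gt[OF assms(1) _ B(1,3)] \<open>e \<notin> F\<close> B(1) assms(3) XE eE by blast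
    with eq show False by simp
  qed
qed

lemma cyclic_flat_Union_circuits_in_flat:
  assumes "matroid E I" "flat E I K"
  shows "cyclic_flat E I (\<Union>{C. circuit E I C \<and> C \<subseteq> K})" (is "cyclic_flat E I ?G")
proof -
  have GK: "?G \<subseteq> K" by blast
  have GE: "?G \<subseteq> E" using GK flat_subset_ground[OF assms(2)] by blast
  have "rk I ?G < rk I (insert e ?G)" if e: "e \<in> E - ?G" for e
  proof -
    obtain B where B: "B \<subseteq> ?G" "B \<in> I" "card B = rk I ?G"
      using ex_indep_card_eq_rk[OF assms(1) GE] by blast
    have "insert e B \<in> I"
    proof (rule ccontr)
      assume dep: "insert e B \<notin> I"
      obtain C where C: "circuit E I C" "e \<in> C" "C \<subseteq> insert e B"
        using ex_circuit_in_insert[OF assms(1) B(2) dep] B(1) GE e by blast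
      have "C \<subseteq> K" if "e \<in> K" using C(3) B(1) GK that by blast
      then have "e \<notin> K" using C(1,2) e by blast
      then show False
        using dep flat_insert_indep[OF assms(1,2) B(2)] B(1) GK e by blast
    qed
    then show ?thesis using rk_insert_gt[OF assms(1) _ B(1,3)] B(1) GE e by blast
  qed
  then have "flat E I ?G" using GE by (simp add: flat_def)
  moreover have "cyclic E I ?G"
    unfolding cyclic_def by (intro exI[of _ "{C. circuit E I C \<and> C \<subseteq> K}"]) auto
  ultimately show ?thesis by (simp add: cyclic_flat_def)
qed

section \<open>Truncation\<close>

lemma truncation_rk:
  "truncation_of E M N \<Longrightarrow> X \<subseteq> E \<Longrightarrow> rk M X = min (rk N X) (rk M E)"
  unfolding truncation_of_def by blast

lemma truncation_rk_ground: "truncation_of E M N \<Longrightarrow> rk N E = Suc (rk M E)"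
  unfolding truncation_of_def by (elim conjE) linarith

lemma truncation_of_cong:
  assumes "truncation_of E M N" "rk N' E = rk N E"
    and "\<And>X. X \<subseteq> E \<Longrightarrow> min (rk N' X) (rk M E) = min (rk N X) (rk M E)"
  shows "truncation_of E M N'"
  unfolding truncation_of_def
proof (intro conjI allI impI)
  show "rk N' E = rk M E + 1" using assms(2) truncation_rk_ground[OF assms(1)] by simp
  fix X assume XE: "X \<subseteq> E"
  show "rk M X = min (rk N' X) (rk M E)"
    using truncation_rk[OF assms(1) XE] assms(3)[OF XE] by simp
qed

lemma truncation_indep_subset:
  assumes "matroid E M" "matroid E N" "truncation_of E M N"
  shows "M \<subseteq> N"
proof
  fix X assume X: "X \<in> M"
  have XE: "X \<subseteq> E" using matroid_indep_in_ground[OF assms(1) X] .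
  have "card X = rk M X" using rk_indep[OF assms(1) X] by simp
  also have "\<dots> = min (rk N X) (rk M E)" by (rule truncation_rk[OF assms(3) XE])
  also have "\<dots> \<le> rk N X" by simp
  finally have "rk N X = card X" using rk_le_card[OF assms(2) XE] by simp
  then show "X \<in> N" by (rule indep_of_rk_eq_card[OF assms(2) XE])
qed

lemma truncation_small_indep:
  assumes "matroid E M" "matroid E N" "truncation_of E M N" "X \<in> N" "card X \<le> rk M E"
  shows "X \<in> M"
proof -
  have XE: "X \<subseteq> E" using matroid_indep_in_ground[OF assms(2,4)] .
  then have "rk M X = card X"
    using rk_indep[OF assms(2,4)] truncation_rk[OF assms(3) XE] assms(5) by simp
  then show ?thesis using indep_of_rk_eq_card[OF assms(1) XE] by simp
qed

lemma truncation_short_circuit: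
  assumes "matroid E M" "matroid E N" "truncation_of E M N" "circuit E N C" "card C \<le> rk M E"
  shows "circuit E M C"
proof -
  have C: "C \<subseteq> E" "C \<notin> N" "\<forall>c\<in>C. C - {c} \<in> N" using assms(4) by (auto simp: circuit_def)
  have "card (C - {c}) \<le> rk M E" for c
    using assms(5) card_Diff1_le[of C c] le_trans by blast
  then have "\<forall>c\<in>C. C - {c} \<in> M" using truncation_small_indep[OF assms(1-3)] C(3) by blast
  moreover have "C \<notin> M" using C(2) truncation_indep_subset[OF assms(1-3)] by blast
  ultimately show ?thesis using C(1) by (simp add: circuit_def)
qed

lemma truncation_cl_subset:
  assumes "matroid E M" "matroid E N" "truncation_of E M N" "X \<subseteq> E" "rk M X < rk M E"
  shows "cl E M X \<subseteq> cl E N X"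
proof
  fix e assume "e \<in> cl E M X"
  then have e: "e \<in> E" "rk M (insert e X) = rk M X" by (auto simp: cl_def)
  moreover have "insert e X \<subseteq> E" using e(1) assms(4) by blast
  ultimately have "min (rk N (insert e X)) (rk M E) = min (rk N X) (rk M E)"
    using truncation_rk[OF assms(3)] assms(4) by metis
  then have "rk N (insert e X) = rk N X"
    using truncation_rk[OF assms(3) assms(4)] assms(5) by (auto simp: min_def split: if_splits)
  with e(1) show "e \<in> cl E N X" by (simp add: cl_def)
qed

lemma truncation_circuit_in_cyclic_flat:
  assumes "matroid E M" "matroid E N" "truncation_of E M N" "flat E N F"
    and "circuit E M C" "C \<subseteq> F" "card C \<le> rk M E"
  obtains G where "cyclic_flat E M G" "C \<subseteq> G" "G \<subseteq> F"
proof -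
  have CE: "C \<subseteq> E" using assms(5) by (simp add: circuit_def)
  have "rk M C \<noteq> card C"
    using indep_of_rk_eq_card[OF assms(1) CE] assms(5) by (auto simp: circuit_def)
  then have "rk M C < rk M E" using rk_le_card[OF assms(1) CE] assms(7) by simp
  let ?K = "cl E M C"
  let ?G = "\<Union>{C'. circuit E M C' \<and> C' \<subseteq> ?K}"
  have "cyclic_flat E M ?G"
    using cyclic_flat_Union_circuits_in_flat[OF assms(1) flat_cl[OF assms(1) CE]] .
  moreover have "C \<subseteq> ?G" using assms(5) subset_cl[OF CE] by blast
  moreover have "?K \<subseteq> F"
    using truncation_cl_subset[OF assms(1-3) CE \<open>rk M C < rk M E\<close>]
      cl_subset_flat[OF assms(2,4,6)] by blast
  then have "?G \<subseteq> F" by blast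
  ultimately show thesis using that by blast
qed

lemma truncation_cyclic_ground:
  assumes "matroid E M" "matroid E N" "truncation_of E M N" "cyclic E N E"
  shows "cyclic E M E"
  unfolding cyclic_iff
proof
  fix x assume x: "x \<in> E"
  obtain C where "circuit E N C" "x \<in> C" using assms(4) x by (auto simp: cyclic_iff)
  then have "rk N (E - {x}) = rk N E" by (rule circuit_rk_delete[OF assms(2)])
  then have "rk M (E - {x}) = rk M E"
    using truncation_rk[OF assms(3), of "E - {x}"] truncation_rk_ground[OF assms(3)] by auto
  then obtain C' where "circuit E M C'" "x \<in> C'" using ex_circuit_of_rk_delete[OF assms(1) x] by blast
  then show "\<exists>C. circuit E M C \<and> x \<in> C \<and> C \<subseteq> E" by (auto simp: circuit_def)
qed

section \<open>Raising the rank of a flat\<close>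

locale flat_raising =
  fixes E :: "'a set" and N :: "'a set set" and F :: "'a set" and x :: 'a and r :: nat
  assumes matroid: "matroid E N"
    and rk_ground: "rk N E = Suc r"
    and flat: "flat E N F"
    and x_in_flat: "x \<in> F"
    and long_circuits: "\<And>C. circuit E N C \<Longrightarrow> x \<in> C \<Longrightarrow> C \<subseteq> F \<Longrightarrow> r < card C"
begin

definition raised_bases :: "'a set set" where
  "raised_bases = {insert x Y | Y. Y \<subseteq> F - {x} \<and> Y \<in> N \<and> card Y = r}"

lemma raised_basesI: "Y \<subseteq> F - {x} \<Longrightarrow> Y \<in> N \<Longrightarrow> card Y = r \<Longrightarrow> insert x Y \<in> raised_bases"
  unfolding raised_bases_def by blast

lemma raised_basesE:
  assumes "W \<in> raised_bases"
  obtains Y where "W = insert x Y" "Y \<subseteq> F - {x}" "Y \<in> N" "card Y = r"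
  using assms unfolding raised_bases_def by blast

lemma flat_subset: "F \<subseteq> E"
  using flat by (rule flat_subset_ground)

lemma raised_basis_subset: "W \<in> raised_bases \<Longrightarrow> W \<subseteq> E"
  using flat_subset x_in_flat by (auto elim!: raised_basesE)

lemma card_raised_basis:
  assumes "W \<in> raised_bases"
  shows "card W = Suc r"
proof -
  obtain Y where Y: "W = insert x Y" "Y \<subseteq> F - {x}" "card Y = r"
    using assms by (rule raised_basesE)
  have "finite Y" using Y(2) flat_subset matroid_finite_subset[OF matroid] by blast
  moreover have "x \<notin> Y" using Y(2) by blast
  ultimately show ?thesis using Y(1,3) by simp
qed

lemma card_le_Suc_r:
  assumes "W \<in> N \<union> raised_bases"
  shows "card W \<le> Suc r"
proof (cases "W \<in> N")
  case True
  then show ?thesis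
    using card_le_rk[OF matroid order_refl matroid_indep_in_ground[OF matroid True] True] rk_ground
    by simp
next
  case False
  then show ?thesis using assms card_raised_basis by simp
qed

lemma raised_subset_closed:
  assumes X: "X \<in> N \<union> raised_bases" and ZX: "Z \<subseteq> X"
  shows "Z \<in> N \<union> raised_bases"
proof (cases "X \<in> N")
  case True
  then show ?thesis using matroid_indep_subset[OF matroid True ZX] by blast
next
  case False
  then have X_raised: "X \<in> raised_bases" using X by blast
  then obtain Y where Y: "X = insert x Y" "Y \<subseteq> F - {x}" "Y \<in> N" "card Y = r"
    by (rule raised_basesE)
  have XF: "X \<subseteq> F" using Y(1,2) x_in_flat by blast
  have fX: "finite X" using raised_basis_subset[OF X_raised] matroid_finite_subset[OF matroid] by blast
  consider "Z = X" | "x \<notin> Z" | "Z \<subset> X" "x \<in> Z" using ZX by blast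
  then show ?thesis
  proof cases
    case 1
    then show ?thesis using X by simp
  next
    case 2
    then have "Z \<subseteq> Y" using ZX Y(1) by blast
    then show ?thesis using matroid_indep_subset[OF matroid Y(3)] by blast
  next
    case 3
    have "card Z < card X" using psubset_card_mono[OF fX 3(1)] .
    then have card_Z: "card Z \<le> r" using card_raised_basis[OF X_raised] by simp
    have "Z \<in> N"
    proof (rule ccontr)
      assume "Z \<notin> N"
      moreover have "Z - {x} \<in> N" using matroid_indep_subset[OF matroid Y(3)] ZX Y(1) by blast
      moreover have "insert x (Z - {x}) = Z" using 3(2) by blast
      moreover have "Z \<subseteq> E" using ZX XF flat_subset by blast
      ultimately obtain C where C: "circuit E N C" "x \<in> C" "C \<subseteq> Z"
        using ex_circuit_in_insert[OF matroid, of "Z - {x}" x] by metis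
      then have "r < card C" using long_circuits ZX XF by blast
      moreover have "card C \<le> card Z" using card_mono[OF finite_subset[OF ZX fX] C(3)] .
      ultimately show False using card_Z by simp
    qed
    then show ?thesis by simp
  qed
qed

lemma raised_augment_size_r:
  assumes X: "X \<in> N" "card X = r" and Y: "Y \<subseteq> F - {x}" "Y \<in> N" "card Y = r"
  shows "\<exists>y\<in>insert x Y - X. insert y X \<in> N \<union> raised_bases"
proof (cases "X \<subseteq> F")
  case XF: True
  show ?thesis
  proof (cases "x \<in> X")
    case False
    then have "insert x X \<in> raised_bases" using raised_basesI XF X by blast
    then show ?thesis using False by blast
  next
    case True
    have fX: "finite X" using matroid_finite_subset[OF matroid matroid_indep_in_ground[OF matroid X(1)]] .
    have "X - {x} \<in> N" using matroid_indep_subset[OF matroid X(1)] by blast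
    moreover have "card (X - {x}) < card Y" using card_Diff1_less[OF fX True] X(2) Y(3) by simp
    ultimately obtain y where y: "y \<in> Y - (X - {x})" "insert y (X - {x}) \<in> N"
      using matroid_augment[OF matroid _ Y(2)] by blast
    have "y \<noteq> x" "y \<notin> X" using y(1) Y(1) by auto
    have "card (insert y (X - {x})) = Suc (card (X - {x}))" using fX \<open>y \<notin> X\<close> by simp
    also have "\<dots> = r" using card_Diff1_less[OF fX True] X(2) card_Diff_singleton[OF True] by simp
    finally have "insert x (insert y (X - {x})) \<in> raised_bases"
      using raised_basesI[OF _ y(2)] XF y(1) Y(1) \<open>y \<noteq> x\<close> by blast
    moreover have "insert x (insert y (X - {x})) = insert y X" using True by blast
    ultimately show ?thesis using y(1) \<open>y \<notin> X\<close> by auto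
  qed
next
  case False
  then obtain z where z: "z \<in> X" "z \<notin> F" by blast
  then have zY: "insert z Y \<in> N"
    using flat_insert_indep[OF matroid flat Y(2)] Y(1) matroid_indep_in_ground[OF matroid X(1)] by blast
  have "finite Y" using Y(1) flat_subset matroid_finite_subset[OF matroid] by blast
  moreover have "z \<notin> Y" using Y(1) z(2) by blast
  ultimately have "card X < card (insert z Y)" using X(2) Y(3) by simp
  then obtain y where y: "y \<in> insert z Y - X" "insert y X \<in> N"
    using matroid_augment[OF matroid X(1) zY] by blast
  then have "y \<in> insert x Y - X" using z(1) by blast
  with y(2) show ?thesis by blast
qed

lemma raised_augment:
  assumes X: "X \<in> N \<union> raised_bases" and Y: "Y \<in> N \<union> raised_bases" and less: "card X < card Y"
  shows "\<exists>y\<in>Y - X. insert y X \<in> N \<union> raised_bases"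
proof -
  have XN: "X \<in> N" using X less card_le_Suc_r[OF Y] card_raised_basis by force
  show ?thesis
  proof (cases "Y \<in> N")
    case True
    then show ?thesis using matroid_augment[OF matroid XN True less] by blast
  next
    case False
    then have Y_raised: "Y \<in> raised_bases" using Y by blast
    then obtain Y0 where Y0: "Y = insert x Y0" "Y0 \<subseteq> F - {x}" "Y0 \<in> N" "card Y0 = r"
      by (rule raised_basesE)
    consider "card X < r" | "card X = r" using less card_raised_basis[OF Y_raised] by linarith
    then show ?thesis
    proof cases
      case 1
      then obtain y where "y \<in> Y0 - X" "insert y X \<in> N"
        using matroid_augment[OF matroid XN Y0(3)] Y0(4) by auto
      then show ?thesis using Y0(1) by blast
    next
      case 2
      then show ?thesis using raised_augment_size_r[OF XN 2 Y0(2-4)] Y0(1) by simp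
    qed
  qed
qed

lemma matroid_raised: "matroid E (N \<union> raised_bases)"
  unfolding matroid_def
proof (intro conjI ballI allI impI)
  show "finite E" using matroid_finite[OF matroid] .
  show "X \<subseteq> E" if "X \<in> N \<union> raised_bases" for X
    using that matroid_indep_in_ground[OF matroid] raised_basis_subset by blast
  show "{} \<in> N \<union> raised_bases" using matroid_empty_indep[OF matroid] by simp
  show "Y \<in> N \<union> raised_bases" if "X \<in> N \<union> raised_bases \<and> Y \<subseteq> X" for X Y
    using raised_subset_closed that by blast
  show "\<exists>y\<in>Y - X. insert y X \<in> N \<union> raised_bases"
    if "X \<in> N \<union> raised_bases \<and> Y \<in> N \<union> raised_bases \<and> card X < card Y" for X Y
    using raised_augment that by blast
qed

lemma rk_raised_ground: "rk (N \<union> raised_bases) E = Suc r"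
proof -
  obtain B where B: "B \<subseteq> E" "B \<in> N" "card B = Suc r"
    using ex_indep_card_eq_rk[OF matroid order_refl] rk_ground by metis
  obtain W where W: "W \<subseteq> E" "W \<in> N \<union> raised_bases" "card W = rk (N \<union> raised_bases) E"
    using ex_indep_card_eq_rk[OF matroid_raised order_refl] by blast
  have "Suc r \<le> rk (N \<union> raised_bases) E"
    using card_le_rk[OF matroid_raised order_refl B(1)] B(2,3) by simp
  moreover have "rk (N \<union> raised_bases) E \<le> Suc r" using card_le_Suc_r[OF W(2)] W(3) by simp
  ultimately show ?thesis by simp
qed

lemma min_rk_raised:
  assumes XE: "X \<subseteq> E"
  shows "min (rk (N \<union> raised_bases) X) r = min (rk N X) r"
proof -
  obtain B where B: "B \<subseteq> X" "B \<in> N" "card B = rk N X"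
    using ex_indep_card_eq_rk[OF matroid XE] by blast
  have le: "rk N X \<le> rk (N \<union> raised_bases) X"
    using card_le_rk[OF matroid_raised XE B(1)] B(2,3) by simp
  obtain W where W: "W \<subseteq> X" "W \<in> N \<union> raised_bases" "card W = rk (N \<union> raised_bases) X"
    using ex_indep_card_eq_rk[OF matroid_raised XE] by blast
  show ?thesis
  proof (cases "W \<in> N")
    case True
    then have "rk (N \<union> raised_bases) X \<le> rk N X" using card_le_rk[OF matroid XE W(1)] W(3) by simp
    with le show ?thesis by simp
  next
    case False
    then have W_raised: "W \<in> raised_bases" using W(2) by blast
    then obtain Y where Y: "W = insert x Y" "Y \<in> N" "card Y = r" by (rule raised_basesE)
    have "r \<le> rk N X" using card_le_rk[OF matroid XE _ Y(2)] Y(1,3) W(1) by blast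
    with le show ?thesis by simp
  qed
qed

lemma circuit_in_raised_bases:
  assumes "F \<noteq> E" and C: "circuit E N C" "x \<in> C" "C \<subseteq> F"
  shows "C \<in> raised_bases"
proof -
  have Cx: "C - {x} \<in> N" using C(1,2) by (auto simp: circuit_def)
  have "card (C - {x}) \<le> rk N F"
    using card_le_rk[OF matroid flat_subset _ Cx] C(3) by blast
  also have "\<dots> < Suc r" using flat_proper_rk_less[OF matroid flat assms(1)] rk_ground by simp
  finally have "card (C - {x}) \<le> r" by simp
  moreover have "r < card C" using long_circuits[OF C] .
  moreover have "card (C - {x}) = card C - 1" by (rule card_Diff_singleton[OF C(2)])
  ultimately have "card (C - {x}) = r" by linarith
  then have "insert x (C - {x}) \<in> raised_bases"
    using Cx C(3) by (intro raised_basesI) auto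
  then show ?thesis using C(2) by (simp add: insert_absorb)
qed

end

section \<open>Free erections\<close>

lemma free_erection_matroid: "free_erection E M N \<Longrightarrow> matroid E N"
  by (simp add: free_erection_def)

lemma free_erection_maximal:
  "free_erection E M N \<Longrightarrow> matroid E N' \<Longrightarrow> truncation_of E M N' \<Longrightarrow> N' \<subseteq> N"
  unfolding free_erection_def weak_le_def by blast

lemma free_erection_short_circuit:
  assumes erection: "free_erection E M N" and trunc: "truncation_of E M N"
    and F: "flat E N F" "F \<noteq> E" and C0: "circuit E N C0" "x \<in> C0" "C0 \<subseteq> F"
  obtains C where "circuit E N C" "x \<in> C" "C \<subseteq> F" "card C \<le> rk M E"
proof (rule ccontr)
  assume no_short: "\<not> thesis"
  have mN: "matroid E N" using free_erection_matroid[OF erection] .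
  have long: "\<And>C. circuit E N C \<Longrightarrow> x \<in> C \<Longrightarrow> C \<subseteq> F \<Longrightarrow> rk M E < card C"
    using that no_short by (meson not_le)
  interpret flat_raising E N F x "rk M E"
    using mN truncation_rk_ground[OF trunc] F(1) C0(2,3) long by unfold_locales blast+
  have "truncation_of E M (N \<union> raised_bases)"
    using truncation_of_cong[OF trunc] rk_raised_ground rk_ground min_rk_raised by simp
  then have "N \<union> raised_bases \<subseteq> N"
    using free_erection_maximal[OF erection matroid_raised] by blast
  with circuit_in_raised_bases[OF F(2) C0] have "C0 \<in> N" by blast
  then show False using C0(1) by (simp add: circuit_def)
qed

lemma free_erection_cyclic_flat_covered:
  assumes mM: "matroid E M" and erection: "free_erection E M N"
    and F: "cyclic_flat E N F" "x \<in> F"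
  obtains G where "cyclic_flat E M G" "x \<in> G" "G \<subseteq> F"
proof -
  have mN: "matroid E N" using free_erection_matroid[OF erection] .
  have flat: "flat E N F" and cyc: "cyclic E N F" using F(1) by (simp_all add: cyclic_flat_def)
  consider "N = M" | "truncation_of E M N" using erection by (auto simp: free_erection_def)
  then show thesis
  proof cases
    case 1
    then show ?thesis using that F by blast
  next
    case trunc: 2
    show ?thesis
    proof (cases "F = E")
      case True
      then have "cyclic_flat E M E"
        using truncation_cyclic_ground[OF mM mN trunc] cyc by (simp add: cyclic_flat_def flat_def)
      then show ?thesis using that True F(2) by blast
    next
      case False
      obtain C0 where "circuit E N C0" "x \<in> C0" "C0 \<subseteq> F" using cyc F(2) by (auto simp: cyclic_iff)
      then obtain C where C: "circuit E N C" "x \<in> C" "C \<subseteq> F" "card C \<le> rk M E"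
        using free_erection_short_circuit[OF erection trunc flat False] by blast
      have "circuit E M C" using truncation_short_circuit[OF mM mN trunc C(1,4)] .
      then obtain G where "cyclic_flat E M G" "C \<subseteq> G" "G \<subseteq> F"
        using truncation_circuit_in_cyclic_flat[OF mM mN trunc flat _ C(3,4)] by blast
      then show ?thesis using that C(2) by blast
    qed
  qed
qed

theorem lemma3p5:
  fixes E :: "'a set" and M N :: "'a set set" and \<C> :: "'a set set"
  assumes "matroid E M"
    and "\<forall>C\<in>\<C>. circuit E M C \<and> \<not> spanning E M C"
    and "free_erection E M N"
    and "\<forall>F. cyclic_flat E M F \<longrightarrow> (\<exists>\<D>\<subseteq>\<C>. F = \<Union>\<D>)"
  shows "\<forall>F. cyclic_flat E N F \<longrightarrow> (\<exists>\<D>\<subseteq>\<C>. F = \<Union>\<D>)"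
proof (intro allI impI)
  fix F assume F: "cyclic_flat E N F"
  have "\<exists>C\<in>\<C>. x \<in> C \<and> C \<subseteq> F" if x: "x \<in> F" for x
  proof -
    obtain G where G: "cyclic_flat E M G" "x \<in> G" "G \<subseteq> F"
      using free_erection_cyclic_flat_covered[OF assms(1,3) F x] .
    then obtain \<D> where "\<D> \<subseteq> \<C>" "G = \<Union>\<D>" using assms(4) by blast
    with G(2,3) show ?thesis by blast
  qed
  then show "\<exists>\<D>\<subseteq>\<C>. F = \<Union>\<D>" by (simp add: ex_subfamily_Union_eq_iff)
qed

end
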